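(* For an integer $k\ge 2$, let $G_k$ be the graph obtained from $k$ vertex-disjoint paths $a_jb_jc_jd_je_jf_j$ ($j\in[k]$) of order $6$ and two further new vertices $x,y$ by adding the edges $xa_j$ and $yf_j$ for all $j\in[k]$. Then $G_k\in\mathcal U$ for every $k\ge 2$. (Note $G_k$ has girth $14$ and minimum degree $2$.)
   Context: All graphs are finite and simple. A set $P\subseteq V(G)$ is an open packing if no two distinct vertices of $P$ have a common neighbor; it is maximal if maximal under inclusion among open packings. $\rho^o(G)$ is the maximum size of an open packing and $\rho^o_L(G)$ the minimum size of a maximal open packing; $\mathcal U$ is the class of graphs with $\rho^o_L(G)=\rho^o(G)$. $[k]=\{1,\dots,k\}$. *)

theory Defs
  imports Main
begin

definition simple_graph :: "'a set \<Rightarrow> ('a \<Rightarrow> 'a \<Rightarrow> bool) \<Rightarrow> bool" where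
  "simple_graph V E \<longleftrightarrow> finite V \<and> (\<forall>u v. E u v \<longrightarrow> u \<in> V \<and> v \<in> V)
     \<and> (\<forall>u v. E u v \<longrightarrow> E v u) \<and> (\<forall>v. \<not> E v v)"

definition open_packing :: "'a set \<Rightarrow> ('a \<Rightarrow> 'a \<Rightarrow> bool) \<Rightarrow> 'a set \<Rightarrow> bool" where
  "open_packing V E P \<longleftrightarrow> P \<subseteq> V \<and>
     (\<forall>u\<in>P. \<forall>v\<in>P. u \<noteq> v \<longrightarrow> \<not> (\<exists>w\<in>V. E u w \<and> E v w))"

definition maximal_open_packing :: "'a set \<Rightarrow> ('a \<Rightarrow> 'a \<Rightarrow> bool) \<Rightarrow> 'a set \<Rightarrow> bool" where
  "maximal_open_packing V E P \<longleftrightarrow> open_packing V E P \<and>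
     (\<forall>Q. open_packing V E Q \<and> P \<subseteq> Q \<longrightarrow> Q = P)"

definition rho_o :: "'a set \<Rightarrow> ('a \<Rightarrow> 'a \<Rightarrow> bool) \<Rightarrow> nat" where
  "rho_o V E = Max (card ` {P. open_packing V E P})"

definition rho_oL :: "'a set \<Rightarrow> ('a \<Rightarrow> 'a \<Rightarrow> bool) \<Rightarrow> nat" where
  "rho_oL V E = Min (card ` {P. maximal_open_packing V E P})"

definition in_U :: "'a set \<Rightarrow> ('a \<Rightarrow> 'a \<Rightarrow> bool) \<Rightarrow> bool" where
  "in_U V E \<longleftrightarrow> rho_oL V E = rho_o V E"

text \<open>The graph G_k. Vertex P j i is the (i+1)-th vertex of the j-th path
  a_j b_j c_j d_j e_j f_j (i = 0..5), so a_j = P j 0 and f_j = P j 5.\<close>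
datatype vtx = X | Y | P nat nat

definition Gk_V :: "nat \<Rightarrow> vtx set" where
  "Gk_V k = {X, Y} \<union> {P j i | j i. j \<in> {1..k} \<and> i < 6}"

definition Gk_E :: "nat \<Rightarrow> vtx \<Rightarrow> vtx \<Rightarrow> bool" where
  "Gk_E k u v \<longleftrightarrow>
     (\<exists>j\<in>{1..k}.
        (u = X \<and> v = P j 0) \<or> (v = X \<and> u = P j 0) \<or>
        (u = Y \<and> v = P j 5) \<or> (v = Y \<and> u = P j 5) \<or>
        (\<exists>i<5. (u = P j i \<and> v = P j (i+1)) \<or> (v = P j i \<and> u = P j (i+1))))"

end

theory Submission
  imports Defs
begin

text \<open>Two distinct vertices conflict (may not both lie in an open packing) iff they are at
distance two. Since G_k is bipartite, the conflict graph splits into two halves, one containing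
x, b_j, d_j, f_j and the other y, a_j, c_j, e_j; in the first half x is joined to every b_j, the
b_j d_j f_j form paths and the f_j form a clique. Depending on whether x lies in the open packing
S, this half is covered by the k + 1 sets {x}, {b_j, d_j, f_j} (then no b_j is in S) or
{x, f_1, ..., f_k}, {b_j, d_j}, and each of them contains at most one vertex of S. Hence every
open packing has at most 2(k + 1) vertices, and a maximal one meets every set of the cover, so
all maximal open packings have exactly 2(k + 1) vertices.\<close>

lemma finite_open_packings:
  "finite V \<Longrightarrow> finite {S. open_packing V E S}"
  by (rule finite_subset[of _ "Pow V"]) (auto simp: open_packing_def)

lemma open_packing_extends_to_maximal:
  assumes "finite V" "open_packing V E S"
  shows "\<exists>M. maximal_open_packing V E M \<and> S \<subseteq> M"
  using finite_has_maximal2[OF finite_open_packings[OF assms(1)], of S E] assms(2)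
  unfolding maximal_open_packing_def by auto

lemma maximal_open_packing_blocked:
  assumes "maximal_open_packing V E M" "v \<in> V" "v \<notin> M"
  shows "\<exists>u\<in>M. u \<noteq> v \<and> (\<exists>w\<in>V. E v w \<and> E u w)"
  using assms unfolding maximal_open_packing_def open_packing_def
  by (metis insert_iff insert_subset subset_insertI)

lemma in_U_if_maximal_open_packings_equicardinal:
  assumes "finite V" "\<And>M. maximal_open_packing V E M \<Longrightarrow> card M = n"
  shows "in_U V E"
proof -
  obtain M0 where M0: "maximal_open_packing V E M0"
    using open_packing_extends_to_maximal[OF assms(1), of E "{}"]
    by (auto simp: open_packing_def)
  have "card S \<le> n" if S: "open_packing V E S" for S
  proof -
    obtain M where "maximal_open_packing V E M" "S \<subseteq> M"
      using open_packing_extends_to_maximal[OF assms(1) S] by blast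
    then show ?thesis
      using assms by (metis card_mono finite_subset maximal_open_packing_def open_packing_def)
  qed
  then have "rho_o V E = n"
    unfolding rho_o_def using M0 assms(2)
    by (intro Max_eqI) (auto simp: finite_open_packings[OF assms(1)] maximal_open_packing_def)
  moreover have "rho_oL V E = n"
  proof -
    have "card ` {M. maximal_open_packing V E M} = {n}"
      using M0 assms(2) by blast
    then show ?thesis unfolding rho_oL_def by simp
  qed
  ultimately show ?thesis unfolding in_U_def by simp
qed

lemma Gk_V_simps [simp]:
  "X \<in> Gk_V k" "Y \<in> Gk_V k" "P j i \<in> Gk_V k \<longleftrightarrow> j \<in> {1..k} \<and> i < 6"
  by (auto simp: Gk_V_def)

lemma finite_Gk_V: "finite (Gk_V k)"
proof -
  have "Gk_V k \<subseteq> {X, Y} \<union> case_prod P ` ({1..k} \<times> {..<6})"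
    by (auto simp: Gk_V_def)
  then show ?thesis by (rule finite_subset) auto
qed

lemma Gk_E_X [simp]: "Gk_E k u X \<longleftrightarrow> (\<exists>j\<in>{1..k}. u = P j 0)"
  and Gk_E_Y [simp]: "Gk_E k u Y \<longleftrightarrow> (\<exists>j\<in>{1..k}. u = P j 5)"
  by (auto simp: Gk_E_def)

lemma Gk_E_P [simp]:
  "Gk_E k u (P j i) \<longleftrightarrow> j \<in> {1..k} \<and>
     (i = 0 \<and> u = X \<or> i = 5 \<and> u = Y \<or> i < 5 \<and> u = P j (i + 1) \<or> 0 < i \<and> i \<le> 5 \<and> u = P j (i - 1))"
  unfolding Gk_E_def by (cases i) force+

fun Gk_conflict :: "nat \<Rightarrow> vtx \<Rightarrow> vtx \<Rightarrow> bool" where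
  "Gk_conflict k X (P j i) \<longleftrightarrow> j \<in> {1..k} \<and> i = 1"
| "Gk_conflict k (P j i) X \<longleftrightarrow> j \<in> {1..k} \<and> i = 1"
| "Gk_conflict k Y (P j i) \<longleftrightarrow> j \<in> {1..k} \<and> i = 4"
| "Gk_conflict k (P j i) Y \<longleftrightarrow> j \<in> {1..k} \<and> i = 4"
| "Gk_conflict k (P j i) (P j' i') \<longleftrightarrow> j \<in> {1..k} \<and> j' \<in> {1..k} \<and> i < 6 \<and> i' < 6 \<and>
     (j = j' \<and> (i = i' + 2 \<or> i' = i + 2) \<or> j \<noteq> j' \<and> (i = 0 \<and> i' = 0 \<or> i = 5 \<and> i' = 5))"
| "Gk_conflict k _ _ \<longleftrightarrow> False"

lemma Gk_conflict_imp_common_neighbour: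
  "Gk_conflict k u v \<Longrightarrow> \<exists>w\<in>Gk_V k. Gk_E k u w \<and> Gk_E k v w"
proof (induction k u v rule: Gk_conflict.induct)
  case (1 k j i)
  then show ?case by (intro bexI[of _ "P j 0"]) auto
next
  case (2 k j i)
  then show ?case by (intro bexI[of _ "P j 0"]) auto
next
  case (3 k j i)
  then show ?case by (intro bexI[of _ "P j 5"]) auto
next
  case (4 k j i)
  then show ?case by (intro bexI[of _ "P j 5"]) auto
next
  case (5 k j i j' i')
  then consider "j = j'" "i = i' + 2" | "j = j'" "i' = i + 2" | "i = 0" "i' = 0" | "i = 5" "i' = 5"
    by auto
  then show ?case
  proof cases
    case 1
    then show ?thesis using 5 by (intro bexI[of _ "P j (i' + 1)"]) auto
  next
    case 2
    then show ?thesis using 5 by (intro bexI[of _ "P j (i + 1)"]) auto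
  next
    case 3
    then show ?thesis using 5 by (intro bexI[of _ X]) auto
  next
    case 4
    then show ?thesis using 5 by (intro bexI[of _ Y]) auto
  qed
qed simp_all

lemma Gk_common_neighbour_imp_conflict:
  "w \<in> Gk_V k \<Longrightarrow> Gk_E k u w \<Longrightarrow> Gk_E k v w \<Longrightarrow> u \<noteq> v \<Longrightarrow> Gk_conflict k u v"
  by (cases w) auto

lemma Gk_conflict_iff:
  "Gk_conflict k u v \<longleftrightarrow> u \<noteq> v \<and> (\<exists>w\<in>Gk_V k. Gk_E k u w \<and> Gk_E k v w)"
proof -
  have "\<not> Gk_conflict k u u" by (cases u) auto
  then show ?thesis
    using Gk_conflict_imp_common_neighbour Gk_common_neighbour_imp_conflict by blast
qed

lemma open_packing_Gk_iff:
  "open_packing (Gk_V k) (Gk_E k) S \<longleftrightarrow> S \<subseteq> Gk_V k \<and> (\<forall>u\<in>S. \<forall>v\<in>S. \<not> Gk_conflict k u v)"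
  unfolding open_packing_def Gk_conflict_iff by blast

text \<open>The cover set of the header containing v: the half, given by the parity (i + 1) mod 2,
and the path j, except that a_j (resp. f_j) joins the set of y (resp. x) unless y (resp. x)
belongs to S.\<close>

definition Gk_slot :: "vtx set \<Rightarrow> vtx \<Rightarrow> nat \<times> nat" where
  "Gk_slot S v = (case v of
      X \<Rightarrow> (0, 0)
    | Y \<Rightarrow> (1, 0)
    | P j i \<Rightarrow> ((i + 1) mod 2,
        if i = 0 \<and> Y \<notin> S \<or> i = 5 \<and> X \<notin> S then 0 else j))"

lemma Gk_slot_collision_on_paths:
  assumes "i < 6" "i' < 6" "j \<in> {1..k}" "j' \<in> {1..k}" "P j i \<noteq> P j' i'"
    and "Gk_slot S (P j i) = Gk_slot S (P j' i')"
  shows "Gk_conflict k (P j i) (P j' i') \<or> X \<in> S \<and> (i = 1 \<or> i' = 1) \<or> Y \<in> S \<and> (i = 4 \<or> i' = 4)"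
proof -
  have "i \<in> {0, 1, 2, 3, 4, 5}" "i' \<in> {0, 1, 2, 3, 4, 5}"
    using assms(1,2) by auto
  then show ?thesis
    using assms(3-) by (elim insertE emptyE) (simp_all add: Gk_slot_def split: if_splits)
qed

lemma Gk_slot_of_X:
  assumes "v \<in> Gk_V k" "X \<in> S" "Gk_slot S v = Gk_slot S X"
  shows "v = X"
  using assms by (cases v) (auto simp: Gk_slot_def split: if_splits)

lemma Gk_slot_of_Y:
  assumes "v \<in> Gk_V k" "Y \<in> S" "Gk_slot S v = Gk_slot S Y"
  shows "v = Y"
  using assms by (cases v) (auto simp: Gk_slot_def split: if_splits)

lemma inj_on_Gk_slot:
  assumes "open_packing (Gk_V k) (Gk_E k) S"
  shows "inj_on (Gk_slot S) S"
proof (rule inj_onI, rule ccontr)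
  fix u v
  assume uv: "u \<in> S" "v \<in> S" "Gk_slot S u = Gk_slot S v" "u \<noteq> v"
  have sub: "S \<subseteq> Gk_V k" and free: "\<And>a b. a \<in> S \<Longrightarrow> b \<in> S \<Longrightarrow> \<not> Gk_conflict k a b"
    using assms unfolding open_packing_Gk_iff by blast+
  show False
  proof (cases "u \<in> {X, Y} \<or> v \<in> {X, Y}")
    case True
    then show ?thesis
      using uv sub Gk_slot_of_X Gk_slot_of_Y by (metis insert_iff singletonD subsetD)
  next
    case False
    then obtain j i j' i' where u: "u = P j i" and v: "v = P j' i'"
      by (cases u; cases v) auto
    with uv sub have "i < 6" "i' < 6" "j \<in> {1..k}" "j' \<in> {1..k}"
      by auto
    from Gk_slot_collision_on_paths[OF this] uv u v
    have "Gk_conflict k u v \<or> X \<in> S \<and> (i = 1 \<or> i' = 1) \<or> Y \<in> S \<and> (i = 4 \<or> i' = 4)"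
      by simp
    then show ?thesis
      using free[of u v] free[of X u] free[of X v] free[of Y u] free[of Y v] uv u v
        \<open>j \<in> {1..k}\<close> \<open>j' \<in> {1..k}\<close>
      by auto
  qed
qed

lemma Gk_slot_range:
  "S \<subseteq> Gk_V k \<Longrightarrow> Gk_slot S ` S \<subseteq> {0..1} \<times> {0..k}"
  by (auto simp: Gk_slot_def split: vtx.splits)

lemma maximal_open_packing_Gk_blocked:
  assumes "maximal_open_packing (Gk_V k) (Gk_E k) M" "v \<in> Gk_V k" "v \<notin> M"
  shows "\<exists>u\<in>M. Gk_conflict k v u"
  using maximal_open_packing_blocked[OF assms] Gk_conflict_iff by blast

lemma maximal_open_packing_Gk_conflict_free:
  "maximal_open_packing (Gk_V k) (Gk_E k) M \<Longrightarrow> u \<in> M \<Longrightarrow> v \<in> M \<Longrightarrow> \<not> Gk_conflict k u v"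
  unfolding maximal_open_packing_def open_packing_Gk_iff by blast

lemma bex_vtx:
  "(\<exists>u\<in>S. Q u) \<longleftrightarrow> X \<in> S \<and> Q X \<or> Y \<in> S \<and> Q Y \<or> (\<exists>j i. P j i \<in> S \<and> Q (P j i))"
  by (metis vtx.exhaust)

lemma Gk_even_slots_covered:
  assumes M: "maximal_open_packing (Gk_V k) (Gk_E k) M" and "m \<le> k"
  shows "(0, m) \<in> Gk_slot M ` M"
proof -
  note blocked = maximal_open_packing_Gk_blocked[OF M]
  note free = maximal_open_packing_Gk_conflict_free[OF M]
  have b_blocked: "X \<in> M \<or> P j 3 \<in> M" if "j \<in> {1..k}" "P j 1 \<notin> M" for j
    using blocked[of "P j 1"] that by (auto simp: eval_nat_numeral bex_vtx)
  have d_blocked: "P j 1 \<in> M \<or> P j 5 \<in> M" if "j \<in> {1..k}" "P j 3 \<notin> M" for j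
    using blocked[of "P j 3"] that by (auto simp: eval_nat_numeral bex_vtx)
  have f_blocked: "P j 3 \<in> M \<or> (\<exists>j'\<in>{1..k}. P j' 5 \<in> M)" if "j \<in> {1..k}" "P j 5 \<notin> M" for j
    using blocked[of "P j 5"] that by (auto simp: eval_nat_numeral bex_vtx)
  have x_blocked: "\<exists>j\<in>{1..k}. P j 1 \<in> M" if "X \<notin> M"
    using blocked[of X] that by (auto simp: bex_vtx)
  show ?thesis
  proof (cases "m = 0")
    case True
    show ?thesis
    proof (cases "X \<in> M")
      case True
      then show ?thesis using \<open>m = 0\<close> by (force simp: Gk_slot_def)
    next
      case False
      have "\<exists>j\<in>{1..k}. P j 5 \<in> M"
      proof (rule ccontr)
        assume "\<not> ?thesis"
        then have "P j 3 \<in> M" if "j \<in> {1..k}" for j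
          using f_blocked that by blast
        then show False
          using x_blocked[OF False] free by fastforce
      qed
      then show ?thesis using \<open>m = 0\<close> False by (force simp: Gk_slot_def)
    qed
  next
    case False
    with \<open>m \<le> k\<close> have m: "m \<in> {1..k}" by simp
    show ?thesis
    proof (cases "X \<in> M")
      case True
      then have "P m 1 \<notin> M" using free m by fastforce
      then have "P m 3 \<in> M \<or> P m 5 \<in> M" using d_blocked m by blast
      then show ?thesis using True by (force simp: Gk_slot_def)
    next
      case False
      then have "P m 1 \<in> M \<or> P m 3 \<in> M" using b_blocked m by blast
      then show ?thesis using False by (force simp: Gk_slot_def)
    qed
  qed
qed

lemma Gk_odd_slots_covered:
  assumes M: "maximal_open_packing (Gk_V k) (Gk_E k) M" and "m \<le> k"
  shows "(1, m) \<in> Gk_slot M ` M"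
proof -
  note blocked = maximal_open_packing_Gk_blocked[OF M]
  note free = maximal_open_packing_Gk_conflict_free[OF M]
  have e_blocked: "Y \<in> M \<or> P j 2 \<in> M" if "j \<in> {1..k}" "P j 4 \<notin> M" for j
    using blocked[of "P j 4"] that by (auto simp: eval_nat_numeral bex_vtx)
  have c_blocked: "P j 4 \<in> M \<or> P j 0 \<in> M" if "j \<in> {1..k}" "P j 2 \<notin> M" for j
    using blocked[of "P j 2"] that by (auto simp: eval_nat_numeral bex_vtx)
  have a_blocked: "P j 2 \<in> M \<or> (\<exists>j'\<in>{1..k}. P j' 0 \<in> M)" if "j \<in> {1..k}" "P j 0 \<notin> M" for j
    using blocked[of "P j 0"] that by (auto simp: eval_nat_numeral bex_vtx)
  have y_blocked: "\<exists>j\<in>{1..k}. P j 4 \<in> M" if "Y \<notin> M"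
    using blocked[of Y] that by (auto simp: bex_vtx)
  show ?thesis
  proof (cases "m = 0")
    case True
    show ?thesis
    proof (cases "Y \<in> M")
      case True
      then show ?thesis using \<open>m = 0\<close> by (force simp: Gk_slot_def)
    next
      case False
      have "\<exists>j\<in>{1..k}. P j 0 \<in> M"
      proof (rule ccontr)
        assume "\<not> ?thesis"
        then have "P j 2 \<in> M" if "j \<in> {1..k}" for j
          using a_blocked that by blast
        then show False
          using y_blocked[OF False] free by fastforce
      qed
      then show ?thesis using \<open>m = 0\<close> False by (force simp: Gk_slot_def)
    qed
  next
    case False
    with \<open>m \<le> k\<close> have m: "m \<in> {1..k}" by simp
    show ?thesis
    proof (cases "Y \<in> M")
      case True
      then have "P m 4 \<notin> M" using free m by fastforce
      then have "P m 2 \<in> M \<or> P m 0 \<in> M" using c_blocked m by blast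
      then show ?thesis using True by (force simp: Gk_slot_def)
    next
      case False
      then have "P m 4 \<in> M \<or> P m 2 \<in> M" using e_blocked m by blast
      then show ?thesis using False by (force simp: Gk_slot_def)
    qed
  qed
qed

lemma card_maximal_open_packing_Gk:
  assumes M: "maximal_open_packing (Gk_V k) (Gk_E k) M"
  shows "card M = 2 * (k + 1)"
proof -
  have "open_packing (Gk_V k) (Gk_E k) M"
    using M by (simp add: maximal_open_packing_def)
  then have "M \<subseteq> Gk_V k" and inj: "inj_on (Gk_slot M) M"
    using inj_on_Gk_slot open_packing_Gk_iff by blast+
  moreover have "{0..1} \<times> {0..k} \<subseteq> Gk_slot M ` M"
    using Gk_even_slots_covered[OF M] Gk_odd_slots_covered[OF M] by (auto simp: le_Suc_eq)
  ultimately have "Gk_slot M ` M = {0..1} \<times> {0..k}"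
    using Gk_slot_range by blast
  then have "card M = card ({0..1::nat} \<times> {0..k})"
    using card_image[OF inj] by simp
  then show ?thesis by (simp add: card_cartesian_product)
qed

theorem mainTheorem16:
  fixes k :: nat
  assumes "k \<ge> 2"
  shows "in_U (Gk_V k) (Gk_E k)"
  using finite_Gk_V card_maximal_open_packing_Gk
  by (rule in_U_if_maximal_open_packings_equicardinal)

end
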